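(* In the cone setting of the context, for each $h,g\in\mathcal C_{\mathbb C}$, \[E(h,g)=\Big\{\frac{\ell(h)}{\ell(g)}:\ell\in\hat{\mathcal C}'_{\mathbb C}\Big\}.\]
   Context: Cone setting. $V$ is a real topological vector space, $\mathcal S\subset V'$ a set of linear functionals such that $\ell(x)=0$ for all $\ell\in\mathcal S$ implies $x=0$, $C_{\mathbb R}=\{h\in V\setminus\{0\}:\ell(h)\ge0\ \forall\ell\in\mathcal S\}$, and $e\in C_{\mathbb R}$ is such that for every $h\in V$ some $\lambda\ge0$ has $\lambda e-h\in C_{\mathbb R}$. Norm $\|h\|=\inf\{\lambda\ge0:\ell(\lambda e\pm h)\ge0\ \forall\ell\in\mathcal S\}$; $\mathcal B_{\mathbb R}$ the completion of $V$; $\mathcal C_{\mathbb R}=\{h\in\mathcal B_{\mathbb R}\setminus\{0\}:\ell(h)\ge0\ \forall\ell\in\mathcal S\}$; $\mathcal C'_{\mathbb R}=\{\ell\in\mathcal B'_{\mathbb R}:\ell(h)\ge0\ \forall h\in\mathcal C_{\mathbb R}\}$; $\mathring{\mathcal C}'_{\mathbb R}=\{\ell\in\mathcal C'_{\mathbb R}:\ell(x)>0\ \forall x\in\mathcal C_{\mathbb R}\}$. $\mathcal S_*$ is the weak-$*$ closure of the convex hull of $\{\lambda\ell:\lambda>0,\ell\in\mathcal S\}$; there exist $m\in\mathcal S_*$, $\kappa\in(0,1)$ with $m(e)=1$ and $m(h)\ge\kappa\|h\|$ on $\mathcal C_{\mathbb R}$. $\mathcal B_{\mathbb C}$ is the complexification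 of $\mathcal B_{\mathbb R}$, real functionals extended complex-linearly. $\mathcal C_{\mathbb C}=\{z(x+iy):z\in\mathbb C\setminus\{0\},x,y\in\mathcal C_{\mathbb R}\}$, $\mathcal C'_{\mathbb C}=\{\ell\in\mathcal B'_{\mathbb C}:\ell(h)\ne0\ \forall h\in\mathcal C_{\mathbb C}\}$, $\hat{\mathcal C}'_{\mathbb C}=\{\pm\ell\pm ip:\ell,p\in\mathring{\mathcal C}'_{\mathbb R}\}$. For $h,g\in\mathcal C_{\mathbb C}$, $E(h,g)=\{\ell(h)/\ell(g):\ell\in\mathcal C'_{\mathbb C}\}$. *)

theory Defs
  imports "HOL-Analysis.Analysis"
begin

text \<open>The completion B_R is represented by a real Banach space type 'b in which V is a
dense linear subspace; the norm of 'b restricted to V is the order-unit norm.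
Functionals in S are represented by their (unique) continuous extensions to B_R.
The complexification B_C is represented by pairs (x,y) standing for x + i y.
A continuous complex-linear functional on B_C is represented by a bounded real-linear
map f : 'b => complex, acting by f(x + i y) = f x + i f y.\<close>

definition CR :: "('b::real_normed_vector \<Rightarrow> real) set \<Rightarrow> 'b set" where
  "CR S = {h. h \<noteq> 0 \<and> (\<forall>l\<in>S. 0 \<le> l h)}"

definition CR_dual :: "('b::real_normed_vector \<Rightarrow> real) set \<Rightarrow> ('b \<Rightarrow> real) set" where
  "CR_dual S = {l. bounded_linear l \<and> (\<forall>h\<in>CR S. 0 \<le> l h)}"

definition CR_dual_int :: "('b::real_normed_vector \<Rightarrow> real) set \<Rightarrow> ('b \<Rightarrow> real) set" where
  "CR_dual_int S = {l \<in> CR_dual S. \<forall>x\<in>CR S. 0 < l x}"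

definition order_unit_norm :: "('b::real_normed_vector \<Rightarrow> real) set \<Rightarrow> 'b \<Rightarrow> 'b \<Rightarrow> real" where
  "order_unit_norm S e h =
     Inf {lam. 0 \<le> lam \<and> (\<forall>l\<in>S. 0 \<le> l (lam *\<^sub>R e + h) \<and> 0 \<le> l (lam *\<^sub>R e - h))}"

text \<open>Convex hull of the cone generated by S, written out as finite convex combinations.\<close>
definition cone_convhull :: "('b \<Rightarrow> real) set \<Rightarrow> ('b \<Rightarrow> real) set" where
  "cone_convhull S = {(\<lambda>x. \<Sum>i<n. c i * (lam i * f i x)) | (n::nat) c lam f.
      0 < n \<and> (\<forall>i<n. 0 \<le> c i \<and> 0 < lam i \<and> f i \<in> S) \<and> (\<Sum>i<n. c i) = 1}"

text \<open>Weak-* closure in B_R': the pointwise (product-topology) closure intersected with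
the continuous dual (weak-* topology = subspace topology of pointwise convergence).\<close>
definition S_star :: "('b::real_normed_vector \<Rightarrow> real) set \<Rightarrow> ('b \<Rightarrow> real) set" where
  "S_star S = closure (cone_convhull S) \<inter> {l. bounded_linear l}"

definition cone_setting :: "'b::banach set \<Rightarrow> ('b \<Rightarrow> real) set \<Rightarrow> 'b \<Rightarrow> bool" where
  "cone_setting V S e \<longleftrightarrow>
     subspace V \<and> closure V = UNIV \<and>
     (\<forall>l\<in>S. bounded_linear l) \<and>
     (\<forall>x\<in>V. (\<forall>l\<in>S. l x = 0) \<longrightarrow> x = 0) \<and>
     e \<in> V \<inter> CR S \<and>
     (\<forall>h\<in>V. \<exists>lam\<ge>0. lam *\<^sub>R e - h \<in> V \<inter> CR S) \<and>
     (\<forall>h\<in>V. norm h = order_unit_norm S e h) \<and>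
     (\<exists>m\<in>S_star S. \<exists>\<kappa>. 0 < \<kappa> \<and> \<kappa> < 1 \<and> m e = 1 \<and> (\<forall>h\<in>CR S. \<kappa> * norm h \<le> m h))"

definition cmul :: "complex \<Rightarrow> 'b::real_vector \<times> 'b \<Rightarrow> 'b \<times> 'b" where
  "cmul z h = (Re z *\<^sub>R fst h - Im z *\<^sub>R snd h, Re z *\<^sub>R snd h + Im z *\<^sub>R fst h)"

definition capply :: "('b \<Rightarrow> complex) \<Rightarrow> 'b \<times> 'b \<Rightarrow> complex" where
  "capply f h = f (fst h) + \<i> * f (snd h)"

definition CC :: "('b::real_normed_vector \<Rightarrow> real) set \<Rightarrow> ('b \<times> 'b) set" where
  "CC S = {cmul z (x, y) | z x y. z \<noteq> 0 \<and> x \<in> CR S \<and> y \<in> CR S}"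

definition CC_dual :: "('b::real_normed_vector \<Rightarrow> real) set \<Rightarrow> ('b \<Rightarrow> complex) set" where
  "CC_dual S = {f. bounded_linear f \<and> (\<forall>h\<in>CC S. capply f h \<noteq> 0)}"

definition CC_dual_hat :: "('b::real_normed_vector \<Rightarrow> real) set \<Rightarrow> ('b \<Rightarrow> complex) set" where
  "CC_dual_hat S = {(\<lambda>x. s * complex_of_real (l x) + t * \<i> * complex_of_real (p x)) | s t l p.
      s \<in> {1, -1} \<and> t \<in> {1, -1} \<and> l \<in> CR_dual_int S \<and> p \<in> CR_dual_int S}"

definition Eset :: "('b::real_normed_vector \<Rightarrow> real) set \<Rightarrow> 'b \<times> 'b \<Rightarrow> 'b \<times> 'b \<Rightarrow> complex set" where
  "Eset S h g = {capply f h / capply f g | f. f \<in> CC_dual S}"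

end

theory Submission
  imports Defs
begin

text \<open>A functional f in C'_C enters E(h,g) only through its values at the four real cone
vectors x1, y1, x2, y2 with h = z1 (x1 + i y1) and g = z2 (x2 + i y2), so it suffices to find
strictly positive l, p and c \<noteq> 0 with l + i p = c f at these four vectors.
Record a real functional by its vector of values there. The value pairs of strictly positive
(l, p) form a convex set, and those of the real and imaginary parts of the multiples c f form
a linear subspace. If the two were disjoint, a separating vector (a1, a2), taken in the span
of value vectors, gives w1 = \<Sum> a1_i u_i and w2 = \<Sum> a2_i u_i with l w1 + p w2 \<ge> 0 for all
strictly positive l, p and f w2 + i f w1 = 0. The first condition puts w1 and w2 into the
closed cone, the second then contradicts f \<in> C'_C unless w1 = w2 = 0, and since (a1, a2) lies
in the span of value vectors this forces (a1, a2) = 0.\<close>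

lemma nonneg_if_nonneg_add_pos_mult:
  fixes A B :: real
  assumes "\<And>d. 0 < d \<Longrightarrow> 0 \<le> A + d * B"
  shows "0 \<le> A"
proof -
  have "((\<lambda>d. A + d * B) \<longlongrightarrow> A + 0 * B) (at_right 0)"
    by (intro tendsto_intros)
  moreover have "\<forall>\<^sub>F d in at_right 0. 0 \<le> A + d * B"
    using eventually_at_right_less[of "0::real"] by (rule eventually_mono) (rule assms)
  ultimately show ?thesis
    by (simp add: tendsto_lowerbound)
qed

lemma eq_0_if_mult_le_const:
  fixes x b :: real
  assumes "\<And>t. t * x \<le> b"
  shows "x = 0"
proof (rule ccontr)
  assume "x \<noteq> 0"
  with assms[of "(\<bar>b\<bar> + 1) / x"] show False by simp
qed

lemma separator_orthogonal_to_subspace: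
  assumes "subspace T" and "x \<in> P" and sep: "\<And>x y. x \<in> P \<Longrightarrow> y \<in> T \<Longrightarrow> 0 \<le> a \<bullet> (x - y)"
    and "y \<in> T"
  shows "a \<bullet> y = 0"
proof (rule eq_0_if_mult_le_const)
  fix t :: real
  have "0 \<le> a \<bullet> (x - t *\<^sub>R y)"
    using assms by (simp add: sep subspace_scale)
  then show "t * (a \<bullet> y) \<le> a \<bullet> x"
    by (simp add: inner_diff_right)
qed

lemma separating_hyperplane_convex_subspace:
  fixes P T :: "'a::euclidean_space set"
  assumes "convex P" "P \<noteq> {}" "subspace T" "P \<inter> T = {}"
  obtains a where "a \<in> span (P \<union> T)" "a \<noteq> 0"
    "\<And>x. x \<in> P \<Longrightarrow> 0 \<le> a \<bullet> x" "\<And>y. y \<in> T \<Longrightarrow> a \<bullet> y = 0"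
proof -
  define K where "K = (\<Union>x\<in>P. \<Union>y\<in>T. {x - y})"
  have "convex K"
    unfolding K_def using convex_differences[OF assms(1) subspace_imp_convex[OF assms(3)]] .
  moreover have "K \<noteq> {}" "0 \<notin> K"
    using assms(2,4) subspace_0[OF assms(3)] unfolding K_def by auto
  ultimately obtain a where a: "a \<in> span K" "a \<noteq> 0" and sep: "\<And>x. x \<in> K \<Longrightarrow> 0 \<le> a \<bullet> x"
    using separating_hyperplane_set_0_inspan by metis
  have "K \<subseteq> span (P \<union> T)"
    unfolding K_def by (auto intro: span_diff span_base)
  then have "a \<in> span (P \<union> T)"
    using a(1) span_minimal[OF _ subspace_span] by blast
  moreover have "0 \<le> a \<bullet> x" if "x \<in> P" for x
    using sep[of "x - 0"] that subspace_0[OF assms(3)] unfolding K_def by fastforce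
  moreover obtain x0 where "x0 \<in> P"
    using assms(2) by blast
  then have "a \<bullet> y = 0" if "y \<in> T" for y
    using separator_orthogonal_to_subspace[OF assms(3) _ _ that, of x0 P] sep unfolding K_def by blast
  ultimately show thesis
    using that a(2) by blast
qed

lemma linear_Re_Im_mult:
  assumes "linear f"
  shows "linear (\<lambda>x. Re (c * f x))" "linear (\<lambda>x. Im (c * f x))"
  by (rule linearI; simp add: linear_add[OF assms] linear_scale[OF assms] algebra_simps)+

lemma capply_cmul:
  assumes "linear f"
  shows "capply f (cmul z h) = z * capply f h"
proof -
  have "capply f (cmul z h) = of_real (Re z) * f (fst h) - of_real (Im z) * f (snd h)
      + \<i> * (of_real (Re z) * f (snd h) + of_real (Im z) * f (fst h))"
    using assms by (simp add: capply_def cmul_def linear_diff linear_add linear_scale scaleR_conv_of_real)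
  also have "\<dots> = (of_real (Re z) + \<i> * of_real (Im z)) * capply f h"
    by (simp add: capply_def algebra_simps)
  finally show ?thesis
    by (simp only: complex_eq[symmetric])
qed

lemma CR_dual_int_iff: "l \<in> CR_dual_int S \<longleftrightarrow> bounded_linear l \<and> (\<forall>x\<in>CR S. 0 < l x)"
  unfolding CR_dual_int_def CR_dual_def by (auto intro: less_imp_le)

lemma CR_dual_int_subset_CR_dual: "CR_dual_int S \<subseteq> CR_dual S"
  by (simp add: CR_dual_int_def)

lemma bounded_linear_in_CR_dual: "s \<in> S \<Longrightarrow> bounded_linear s \<Longrightarrow> s \<in> CR_dual S"
  by (simp add: CR_dual_def CR_def)

lemma CR_dual_int_add:
  assumes l: "l \<in> CR_dual S" and p: "p \<in> CR_dual_int S" and "0 \<le> a" "0 < b"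
  shows "(\<lambda>x. a * l x + b * p x) \<in> CR_dual_int S"
proof -
  have "bounded_linear (\<lambda>x. a * l x + b * p x)"
    using l p by (intro bounded_linear_add bounded_linear_mult_right[THEN bounded_linear_compose])
      (auto simp: CR_dual_def CR_dual_int_iff)
  moreover have "0 < a * l x + b * p x" if "x \<in> CR S" for x
    using l p that \<open>0 \<le> a\<close> \<open>0 < b\<close> by (intro add_nonneg_pos) (auto simp: CR_dual_def CR_dual_int_iff)
  ultimately show ?thesis
    by (simp add: CR_dual_int_iff)
qed

lemma convex_comb_in_CR_dual_int:
  assumes "l \<in> CR_dual_int S" "p \<in> CR_dual_int S" "0 \<le> a" "0 \<le> b" "a + b = 1"
  shows "(\<lambda>x. a * l x + b * p x) \<in> CR_dual_int S"
proof (cases "b = 0")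
  case True
  then show ?thesis using assms by simp
next
  case False
  then show ?thesis
    using assms CR_dual_int_subset_CR_dual by (intro CR_dual_int_add) auto
qed

lemma nonneg_on_S_if_nonneg_on_CR_dual_int:
  assumes S: "\<forall>s\<in>S. bounded_linear s" and m: "m \<in> CR_dual_int S"
    and nonneg: "\<forall>l\<in>CR_dual_int S. 0 \<le> l w"
  shows "\<forall>s\<in>S. 0 \<le> s w"
proof
  fix s assume "s \<in> S"
  then have s: "s \<in> CR_dual S" using S by (simp add: bounded_linear_in_CR_dual)
  show "0 \<le> s w"
  proof (rule nonneg_if_nonneg_add_pos_mult)
    fix d :: real assume "0 < d"
    show "0 \<le> s w + d * m w"
      using bspec[OF nonneg CR_dual_int_add[OF s m, of 1 d]] \<open>0 < d\<close> by simp
  qed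
qed

lemma cone_setting_CR_dual_int_nonempty:
  assumes "cone_setting V S e"
  obtains m where "m \<in> CR_dual_int S"
proof -
  have "\<exists>m\<in>S_star S. \<exists>\<kappa>. 0 < \<kappa> \<and> \<kappa> < 1 \<and> m e = 1 \<and> (\<forall>h\<in>CR S. \<kappa> * norm h \<le> m h)"
    using assms unfolding cone_setting_def by (elim conjE)
  then obtain m \<kappa> where "m \<in> S_star S" "0 < \<kappa>" "\<forall>h\<in>CR S. \<kappa> * norm h \<le> m h"
    by blast
  moreover have "0 < \<kappa> * norm h" if "h \<in> CR S" for h
    using that \<open>0 < \<kappa>\<close> by (simp add: CR_def)
  ultimately have "m \<in> CR_dual_int S"
    by (auto simp: CR_dual_int_iff S_star_def intro: less_le_trans)
  then show thesis
    by (rule that)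
qed

lemma CC_dual_linear: "f \<in> CC_dual S \<Longrightarrow> linear f"
  by (simp add: CC_dual_def bounded_linear.linear)

lemma CC_dual_nonzero:
  assumes "f \<in> CC_dual S" "w \<in> CR S" "w' \<in> CR S"
  shows "f w + \<i> * f w' \<noteq> 0"
proof -
  have "cmul 1 (w, w') \<in> CC S"
    using assms(2,3) unfolding CC_def by fastforce
  with assms(1) have "capply f (cmul 1 (w, w')) \<noteq> 0"
    by (simp add: CC_dual_def)
  then show ?thesis
    by (simp add: capply_def cmul_def)
qed

lemma CC_dual_hat_subset_CC_dual: "CC_dual_hat S \<subseteq> CC_dual S"
proof
  fix F assume "F \<in> CC_dual_hat S"
  then obtain s t l p where F: "F = (\<lambda>x. s * of_real (l x) + t * \<i> * of_real (p x))"
    and st: "s \<in> {1, -1}" "t \<in> {1, -1}" and lp: "l \<in> CR_dual_int S" "p \<in> CR_dual_int S"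
    unfolding CC_dual_hat_def by blast
  have "bounded_linear F"
    using lp unfolding F CR_dual_int_iff
    by (intro bounded_linear_add bounded_linear_compose[OF bounded_linear_mult_right]
        bounded_linear_compose[OF bounded_linear_of_real]) auto
  moreover have "capply F w \<noteq> 0" if "w \<in> CC S" for w
  proof -
    obtain z x y where w: "w = cmul z (x, y)" "z \<noteq> 0" "x \<in> CR S" "y \<in> CR S"
      using \<open>w \<in> CC S\<close> unfolding CC_def by blast
    have "0 < l x" "0 < l y" "0 < p x" "0 < p y"
      using lp w by (auto simp: CR_dual_int_iff)
    \<comment> \<open>For s = t the imaginary part, for s = -t the real part of capply F (x, y) is
      \<plusminus>(a sum of two positive values)\<close>
    then have "capply F (x, y) \<noteq> 0"
      using st by (auto simp: capply_def F complex_eq_iff)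
    then show ?thesis
      using w(1,2) capply_cmul[OF bounded_linear.linear[OF \<open>bounded_linear F\<close>]] by simp
  qed
  ultimately show "F \<in> CC_dual S"
    by (simp add: CC_dual_def)
qed

lemma CC_dual_vanishing_on_closed_cone:
  assumes f: "f \<in> CC_dual S" and "\<forall>s\<in>S. 0 \<le> s w" "\<forall>s\<in>S. 0 \<le> s w'"
    and vanish: "f w + \<i> * f w' = 0"
  shows "w = 0 \<and> w' = 0"
proof (rule ccontr)
  assume "\<not> (w = 0 \<and> w' = 0)"
  moreover have "w = 0 \<or> w \<in> CR S" "w' = 0 \<or> w' \<in> CR S"
    using assms(2,3) by (auto simp: CR_def)
  ultimately consider "w \<in> CR S" "w' \<in> CR S" | "w \<in> CR S" "w' = 0" | "w = 0" "w' \<in> CR S"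
    by blast
  moreover have "f 0 = 0"
    using CC_dual_linear[OF f] by (rule linear_0)
  ultimately show False
  proof cases
    case 1
    then show False using CC_dual_nonzero[OF f] vanish by blast
  next
    case 2
    then have "f w = 0" using vanish \<open>f 0 = 0\<close> by simp
    then show False using CC_dual_nonzero[OF f 2(1) 2(1)] by simp
  next
    case 3
    then have "f w' = 0" using vanish \<open>f 0 = 0\<close> by simp
    then show False using CC_dual_nonzero[OF f 3(2) 3(2)] by simp
  qed
qed

lemma CC_dual_vanishing_on_dual_nonneg_pair:
  assumes S: "\<forall>s\<in>S. bounded_linear s" and m: "m \<in> CR_dual_int S" and f: "f \<in> CC_dual S"
    and nonneg: "\<forall>l\<in>CR_dual_int S. \<forall>p\<in>CR_dual_int S. 0 \<le> l w1 + p w2"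
    and vanish: "f w2 + \<i> * f w1 = 0"
  shows "w1 = 0 \<and> w2 = 0"
proof -
  have m_scaled: "(\<lambda>x. d * m x) \<in> CR_dual_int S" if "0 < d" for d
    using CR_dual_int_add[of m S m 0 d] m that CR_dual_int_subset_CR_dual by auto
  have "0 \<le> l w1" if "l \<in> CR_dual_int S" for l
  proof (rule nonneg_if_nonneg_add_pos_mult)
    fix d :: real assume "0 < d"
    show "0 \<le> l w1 + d * m w2"
      using bspec[OF bspec[OF nonneg that] m_scaled[OF \<open>0 < d\<close>]] by simp
  qed
  moreover have "0 \<le> p w2" if "p \<in> CR_dual_int S" for p
  proof (rule nonneg_if_nonneg_add_pos_mult)
    fix d :: real assume "0 < d"
    show "0 \<le> p w2 + d * m w1"
      using bspec[OF bspec[OF nonneg m_scaled[OF \<open>0 < d\<close>]] that] by (simp add: add.commute)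
  qed
  ultimately have "\<forall>s\<in>S. 0 \<le> s w1" "\<forall>s\<in>S. 0 \<le> s w2"
    using nonneg_on_S_if_nonneg_on_CR_dual_int[OF S m] by blast+
  then show ?thesis
    using CC_dual_vanishing_on_closed_cone[OF f _ _ vanish] by blast
qed

definition eval_at :: "('i::finite \<Rightarrow> 'b) \<Rightarrow> ('b \<Rightarrow> real) \<Rightarrow> real^'i" where
  "eval_at u l = (\<chi> i. l (u i))"

definition lincomb :: "('i::finite \<Rightarrow> 'b::real_vector) \<Rightarrow> real^'i \<Rightarrow> 'b" where
  "lincomb u a = (\<Sum>i\<in>UNIV. a $ i *\<^sub>R u i)"

lemma inner_eval_at: "linear l \<Longrightarrow> a \<bullet> eval_at u l = l (lincomb u a)"
  by (simp add: eval_at_def lincomb_def inner_vec_def linear_sum linear_scale)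

lemma eval_at_comb: "eval_at u (\<lambda>x. a * l x + b * p x) = a *\<^sub>R eval_at u l + b *\<^sub>R eval_at u p"
  by (simp add: eval_at_def vec_eq_iff)

lemma convex_eval_at_CR_dual_int: "convex (eval_at u ` CR_dual_int S)"
  unfolding convex_def
  by (auto simp: eval_at_comb[symmetric] intro!: imageI convex_comb_in_CR_dual_int)

lemma eq_0_if_in_span_eval_at:
  assumes "a \<in> span (eval_at u ` {l. linear l})" and "lincomb u a = 0"
  shows "a = 0"
proof -
  have "orthogonal a (eval_at u l)" if "linear l" for l
    using that assms(2) by (simp add: orthogonal_def inner_eval_at linear_0)
  then have "orthogonal a a"
    using orthogonal_to_span[OF assms(1)] by blast
  then show ?thesis
    by (simp only: orthogonal_self)
qed

lemma CC_dual_admits_no_separator: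
  fixes a1 a2 :: "real^'i::finite"
  assumes S: "\<forall>s\<in>S. bounded_linear s" and m: "m \<in> CR_dual_int S" and f: "f \<in> CC_dual S"
    and span: "a1 \<in> span (eval_at u ` {l. linear l})" "a2 \<in> span (eval_at u ` {l. linear l})"
    and nonneg: "\<And>l p. l \<in> CR_dual_int S \<Longrightarrow> p \<in> CR_dual_int S \<Longrightarrow>
      0 \<le> a1 \<bullet> eval_at u l + a2 \<bullet> eval_at u p"
    and orth: "\<And>c. a1 \<bullet> eval_at u (\<lambda>x. Re (c * f x)) + a2 \<bullet> eval_at u (\<lambda>x. Im (c * f x)) = 0"
  shows "a1 = 0 \<and> a2 = 0"
proof -
  note lin_f = linear_Re_Im_mult[OF CC_dual_linear[OF f]]
  have "Re (c * f (lincomb u a1)) + Im (c * f (lincomb u a2)) = 0" for c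
    using orth[of c] by (simp only: inner_eval_at[OF lin_f(1)] inner_eval_at[OF lin_f(2)])
  from this[of 1] this[of \<i>] have "f (lincomb u a2) + \<i> * f (lincomb u a1) = 0"
    by (simp add: complex_eq_iff)
  moreover have "\<forall>l\<in>CR_dual_int S. \<forall>p\<in>CR_dual_int S. 0 \<le> l (lincomb u a1) + p (lincomb u a2)"
    using nonneg by (simp add: inner_eval_at CR_dual_int_iff bounded_linear.linear)
  ultimately have "lincomb u a1 = 0" "lincomb u a2 = 0"
    using CC_dual_vanishing_on_dual_nonneg_pair[OF S m f] by blast+
  then show ?thesis
    using span eq_0_if_in_span_eval_at by blast
qed

lemma CC_dual_matched_by_CR_dual_int_pair:
  fixes u :: "'i::finite \<Rightarrow> 'b::real_normed_vector"
  assumes S: "\<forall>s\<in>S. bounded_linear s" and m: "m \<in> CR_dual_int S" and f: "f \<in> CC_dual S"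
  obtains l p c where "l \<in> CR_dual_int S" "p \<in> CR_dual_int S"
    "eval_at u l = eval_at u (\<lambda>x. Re (c * f x))" "eval_at u p = eval_at u (\<lambda>x. Im (c * f x))"
proof -
  define E where "E = eval_at u ` CR_dual_int S"
  define fv where "fv c = (eval_at u (\<lambda>x. Re (c * f x)), eval_at u (\<lambda>x. Im (c * f x)))" for c
  define Y where "Y = span (eval_at u ` {l. linear l})"
  note lin_f = linear_Re_Im_mult[OF CC_dual_linear[OF f]]
  have "linear fv"
    by (rule linearI) (simp_all add: fv_def eval_at_def vec_eq_iff algebra_simps)
  have "(E \<times> E) \<inter> range fv \<noteq> {}"
  proof
    assume disjoint: "(E \<times> E) \<inter> range fv = {}"
    have "convex (E \<times> E)" "E \<times> E \<noteq> {}"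
      using m by (auto simp: E_def intro: convex_Times convex_eval_at_CR_dual_int)
    moreover have "subspace (range fv)"
      using \<open>linear fv\<close> by (simp add: linear_subspace_image)
    \<comment> \<open>Taking the separator in the span of value vectors matters: if the u i are linearly
      dependent, some nonzero vector is orthogonal to all of them.\<close>
    ultimately obtain a where a: "a \<in> span (E \<times> E \<union> range fv)" "a \<noteq> 0"
      and nonneg: "\<And>x. x \<in> E \<times> E \<Longrightarrow> 0 \<le> a \<bullet> x" and orth: "\<And>y. y \<in> range fv \<Longrightarrow> a \<bullet> y = 0"
      using separating_hyperplane_convex_subspace disjoint by metis
    obtain a1 a2 where a12: "a = (a1, a2)"
      by fastforce
    have "E \<subseteq> Y" "range fv \<subseteq> Y \<times> Y"
      using lin_f by (auto simp: Y_def E_def fv_def CR_dual_int_iff bounded_linear.linear intro: span_base)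
    then have "span (E \<times> E \<union> range fv) \<subseteq> Y \<times> Y"
      by (intro span_minimal) (auto simp: Y_def subspace_Times)
    with a(1) have "a1 \<in> Y" "a2 \<in> Y"
      unfolding a12 by auto
    then have "a1 = 0 \<and> a2 = 0"
      using nonneg orth unfolding Y_def
      by (intro CC_dual_admits_no_separator[OF S m f]) (auto simp: a12 E_def fv_def)
    with a(2) show False
      by (simp add: a12 zero_prod_def)
  qed
  then obtain l p c where "l \<in> CR_dual_int S" "p \<in> CR_dual_int S" "(eval_at u l, eval_at u p) = fv c"
    unfolding E_def by auto
  then show thesis
    using that by (simp add: fv_def)
qed

lemma CC_dual_rescaled_by_hat_on_finite_family:
  fixes u :: "'i::finite \<Rightarrow> 'b::real_normed_vector"
  assumes S: "\<forall>s\<in>S. bounded_linear s" and m: "m \<in> CR_dual_int S" and f: "f \<in> CC_dual S"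
    and u0: "u i0 \<in> CR S"
  obtains L c where "L \<in> CC_dual_hat S" "c \<noteq> 0" "\<And>i. L (u i) = c * f (u i)"
proof -
  obtain l p c where lp: "l \<in> CR_dual_int S" "p \<in> CR_dual_int S"
    and "eval_at u l = eval_at u (\<lambda>x. Re (c * f x))" "eval_at u p = eval_at u (\<lambda>x. Im (c * f x))"
    by (rule CC_dual_matched_by_CR_dual_int_pair[OF S m f])
  then have lu: "l (u i) = Re (c * f (u i))" and pu: "p (u i) = Im (c * f (u i))" for i
    by (simp_all add: eval_at_def vec_eq_iff)
  define L where "L = (\<lambda>x. 1 * complex_of_real (l x) + 1 * \<i> * complex_of_real (p x))"
  have "L \<in> CC_dual_hat S"
    unfolding CC_dual_hat_def L_def using lp by blast
  moreover have "c \<noteq> 0"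
    using lu[of i0] lp(1) u0 by (auto simp: CR_dual_int_iff)
  moreover have "L (u i) = c * f (u i)" for i
    by (simp add: L_def lu pu complex_eq_iff)
  ultimately show thesis
    using that by blast
qed

lemma CC_dual_rescaled_by_hat:
  fixes f :: "'b::real_normed_vector \<Rightarrow> complex"
  assumes S: "\<forall>s\<in>S. bounded_linear s" and m: "m \<in> CR_dual_int S" and f: "f \<in> CC_dual S"
    and "h \<in> CC S" "g \<in> CC S"
  obtains L c where "L \<in> CC_dual_hat S" "c \<noteq> 0"
    "capply L h = c * capply f h" "capply L g = c * capply f g"
proof -
  obtain z1 x1 y1 where h: "h = cmul z1 (x1, y1)" "x1 \<in> CR S" "y1 \<in> CR S"
    using \<open>h \<in> CC S\<close> unfolding CC_def by blast
  obtain z2 x2 y2 where g: "g = cmul z2 (x2, y2)"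
    using \<open>g \<in> CC S\<close> unfolding CC_def by blast
  define u :: "bool \<times> bool \<Rightarrow> 'b" where
    "u = (\<lambda>(a, b). if a then (if b then x1 else y1) else (if b then x2 else y2))"
  obtain L c where L: "L \<in> CC_dual_hat S" "c \<noteq> 0" and Lu: "\<And>i. L (u i) = c * f (u i)"
    using CC_dual_rescaled_by_hat_on_finite_family[OF S m f, of u "(True, True)"] h(2)
    by (auto simp: u_def)
  have "linear L"
    using L(1) CC_dual_hat_subset_CC_dual CC_dual_linear by blast
  have rescaled: "capply L (cmul z (x, y)) = c * capply f (cmul z (x, y))"
    if "L x = c * f x" "L y = c * f y" for z x y
    using that by (simp only: capply_cmul[OF \<open>linear L\<close>] capply_cmul[OF CC_dual_linear[OF f]])
      (simp add: capply_def algebra_simps)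
  have "capply L h = c * capply f h"
    unfolding h(1) using Lu[of "(True, True)"] Lu[of "(True, False)"] by (intro rescaled) (simp_all add: u_def)
  moreover have "capply L g = c * capply f g"
    unfolding g using Lu[of "(False, True)"] Lu[of "(False, False)"] by (intro rescaled) (simp_all add: u_def)
  ultimately show thesis
    using that L by blast
qed

theorem lemma5p9:
  fixes V :: "'b::banach set" and S :: "('b \<Rightarrow> real) set" and e :: 'b
    and h g :: "'b \<times> 'b"
  assumes "cone_setting V S e"
    and "h \<in> CC S" and "g \<in> CC S"
  shows "Eset S h g = {capply f h / capply f g | f. f \<in> CC_dual_hat S}"
proof (intro set_eqI iffI)
  fix r assume "r \<in> Eset S h g"
  then obtain f where r: "r = capply f h / capply f g" and f: "f \<in> CC_dual S"
    unfolding Eset_def by blast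
  have S: "\<forall>s\<in>S. bounded_linear s"
    using assms(1) by (simp add: cone_setting_def)
  obtain m where m: "m \<in> CR_dual_int S"
    using assms(1) by (rule cone_setting_CR_dual_int_nonempty)
  obtain L c where "L \<in> CC_dual_hat S" "c \<noteq> 0" "capply L h = c * capply f h" "capply L g = c * capply f g"
    by (rule CC_dual_rescaled_by_hat[OF S m f assms(2,3)])
  then have "r = capply L h / capply L g"
    using r by simp
  then show "r \<in> {capply f h / capply f g | f. f \<in> CC_dual_hat S}"
    using \<open>L \<in> CC_dual_hat S\<close> by blast
next
  fix r assume "r \<in> {capply f h / capply f g | f. f \<in> CC_dual_hat S}"
  then show "r \<in> Eset S h g"
    unfolding Eset_def using CC_dual_hat_subset_CC_dual by blast
qed

end
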